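(* Let $\Lambda=\{(\lambda_1,\lambda_2):1\le\lambda_1<\lambda_2\le n\}$ and $V$ the set of functions $v:\Lambda\to\mathbb Z$. Let $H=\bigoplus_{\sigma\in S_n}H_\sigma$ with $H_\sigma=\ell^2(\mathbb Z)^{\otimes\Lambda}$, the tensor factors labelled by $\lambda\in\Lambda$, with standard basis $\{e^\lambda_{\sigma,m}:m\in\mathbb Z\}$ in the factor labelled $\lambda$, and put $\varepsilon_{\sigma,v}=\bigotimes_{\lambda\in\Lambda}e^\lambda_{\sigma,v(\lambda)}$ (an orthonormal basis of $H$ as $\sigma\in S_n$, $v\in V$ vary). For $i,k\in\{1,\dots,n\}$ let $U_{ik}$ be the bounded operator on $H$ with $U_{ik}\varepsilon_{\sigma,v}=\bigotimes_\lambda U_{ik}^\lambda e^\lambda_{\sigma,v(\lambda)}$ if $\sigma(k)=i$ and $U_{ik}\varepsilon_{\sigma,v}=0$ if $\sigma(k)\neq i$, where $U_{ik}^\lambda e^\lambda_{\sigma,m}=e^\lambda_{\sigma,m}$ if $k\notin\{\lambda_1,\lambda_2\}$, $U_{ik}^\lambda e^\lambda_{\sigma,m}=(\overline{\omega_{i,\sigma(\lambda_2)}}\,\omega_{k,\lambda_2})^me^\lambda_{\sigma,m}$ if $k=\lambda_1$, and $U_{ik}^\lambda e^\lambda_{\sigma,m}=e^\lambda_{\sigma,m+1}$ if $k=\lambda_2$. Then the operators $U_{ik}$ satisfy, for all $i,j,k,l$: $U_{ik}U_{jl}+\omega_{ji}U_{jk}U_{il}=\omega_{kl}U_{il}U_{jk}+\omega_{ji}\omega_{kl}U_{jl}U_{ik}$;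 $\sum_iU_{ik}U_{il}^*=\delta_{kl}1$; $\sum_iU_{il}^*U_{ik}=\delta_{kl}1$; $U_{jk}U_{ik}^*=0$ and $U_{ik}^*U_{jk}=0$ for $i\neq j$.
   Context: $n\ge2$, $\theta=(\theta_{ij})\in M_n(\mathbb R)$ skew-symmetric, $\omega_{ij}=e^{2\pi i\theta_{ij}}$; $S_n$ is the symmetric group on $\{1,\dots,n\}$. *)

theory Defs
  imports "HOL-Analysis.Analysis"
begin

definition Lam :: "nat \<Rightarrow> (nat \<times> nat) set" where
  "Lam n = {(l1, l2). 1 \<le> l1 \<and> l1 < l2 \<and> l2 \<le> n}"

definition omega :: "(nat \<Rightarrow> nat \<Rightarrow> real) \<Rightarrow> nat \<Rightarrow> nat \<Rightarrow> complex" where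
  "omega \<theta> i j = exp (2 * of_real pi * \<i> * of_real (\<theta> i j))"

text \<open>Basis indices (sigma, v) of H: sigma a permutation of {1..n}, v : Lambda -> int
  (represented extensionally, i.e. v is 0 outside Lambda).\<close>
type_synonym bidx = "(nat \<Rightarrow> nat) \<times> (nat \<times> nat \<Rightarrow> int)"

definition Idx :: "nat \<Rightarrow> bidx set" where
  "Idx n = {(\<sigma>, v). \<sigma> permutes {1..n} \<and> (\<forall>p. p \<notin> Lam n \<longrightarrow> v p = 0)}"

text \<open>Bounded operators on H are represented by their matrices w.r.t. the orthonormal
  basis eps_(sigma,v):  M a b = < eps_a , T eps_b >.\<close>
type_synonym opmat = "bidx \<Rightarrow> bidx \<Rightarrow> complex"

definition mmult :: "nat \<Rightarrow> opmat \<Rightarrow> opmat \<Rightarrow> opmat" where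
  "mmult n A B = (\<lambda>a b. infsum (\<lambda>c. A a c * B c b) (Idx n))"

definition madj :: "opmat \<Rightarrow> opmat" where
  "madj A = (\<lambda>a b. cnj (A b a))"

definition mid :: opmat where
  "mid = (\<lambda>a b. if a = b then 1 else 0)"

definition mzero :: opmat where
  "mzero = (\<lambda>a b. 0)"

definition madd :: "opmat \<Rightarrow> opmat \<Rightarrow> opmat" where
  "madd A B = (\<lambda>a b. A a b + B a b)"

definition msmult :: "complex \<Rightarrow> opmat \<Rightarrow> opmat" where
  "msmult c A = (\<lambda>a b. c * A a b)"

definition msum :: "nat set \<Rightarrow> (nat \<Rightarrow> opmat) \<Rightarrow> opmat" where
  "msum S F = (\<lambda>a b. \<Sum>i\<in>S. F i a b)"

definition meq :: "nat \<Rightarrow> opmat \<Rightarrow> opmat \<Rightarrow> bool" where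
  "meq n A B \<longleftrightarrow> (\<forall>a\<in>Idx n. \<forall>b\<in>Idx n. A a b = B a b)"

text \<open>The single-factor operator U_ik^lambda (for the summand sigma), acting on e_m:
  U^lambda e_m = c * e_m', returned as the pair (c, m').\<close>
definition Ufac :: "(nat \<Rightarrow> nat \<Rightarrow> real) \<Rightarrow> nat \<Rightarrow> nat \<Rightarrow> (nat \<Rightarrow> nat) \<Rightarrow> nat \<times> nat
                    \<Rightarrow> int \<Rightarrow> complex \<times> int" where
  "Ufac \<theta> i k \<sigma> l m =
     (if k \<noteq> fst l \<and> k \<noteq> snd l then (1, m)
      else if k = fst l then ((cnj (omega \<theta> i (\<sigma> (snd l))) * omega \<theta> k (snd l)) powi m, m)
      else (1, m + 1))"

text \<open>Tensor product over lambda in Lambda of the U^lambda applied to eps_(sigma,v):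
  coefficient and target index.\<close>
definition Ucoef :: "nat \<Rightarrow> (nat \<Rightarrow> nat \<Rightarrow> real) \<Rightarrow> nat \<Rightarrow> nat \<Rightarrow> bidx \<Rightarrow> complex" where
  "Ucoef n \<theta> i k b = (\<Prod>l\<in>Lam n. fst (Ufac \<theta> i k (fst b) l (snd b l)))"

definition Utgt :: "nat \<Rightarrow> (nat \<Rightarrow> nat \<Rightarrow> real) \<Rightarrow> nat \<Rightarrow> nat \<Rightarrow> bidx \<Rightarrow> bidx" where
  "Utgt n \<theta> i k b = (fst b, \<lambda>l. if l \<in> Lam n then snd (Ufac \<theta> i k (fst b) l (snd b l)) else 0)"

definition Umat :: "nat \<Rightarrow> (nat \<Rightarrow> nat \<Rightarrow> real) \<Rightarrow> nat \<Rightarrow> nat \<Rightarrow> opmat" where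
  "Umat n \<theta> i k = (\<lambda>a b. if fst b k = i \<and> a = Utgt n \<theta> i k b then Ucoef n \<theta> i k b else 0)"

end

theory Submission
  imports Defs
begin

text \<open>Each \<open>U\<^sub>i\<^sub>k\<close> is a weighted partial shift of the basis: if \<open>\<sigma> k = i\<close> it sends
  \<open>\<epsilon>\<^sub>\<sigma>\<^sub>,\<^sub>v\<close> to a unimodular multiple of \<open>\<epsilon>\<^sub>\<sigma>\<^sub>,\<^sub>v\<^sub>'\<close>, where \<open>v'\<close> raises \<open>v\<close> by one on the
  pairs \<open>\<lambda>\<close> with \<open>\<lambda>\<^sub>2 = k\<close>, and otherwise it kills \<open>\<epsilon>\<^sub>\<sigma>\<^sub>,\<^sub>v\<close>. Shifts for different \<open>k\<close>
  commute, and moving the shift of \<open>U\<^sub>j\<^sub>l\<close> past the phase of \<open>U\<^sub>i\<^sub>k\<close> changes only the factor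
  of the pair \<open>{k,l}\<close>, by \<open>\<omega>\<^sub>j\<^sub>i \<omega>\<^sub>k\<^sub>l\<close>. This gives the twisted commutation
  \<open>U\<^sub>i\<^sub>k U\<^sub>j\<^sub>l = \<omega>\<^sub>j\<^sub>i \<omega>\<^sub>k\<^sub>l U\<^sub>j\<^sub>l U\<^sub>i\<^sub>k\<close>, and the four-term relation is the sum of two instances
  of it. Both \<open>U\<^sub>i\<^sub>k U\<^sub>i\<^sub>k\<^sup>*\<close> and \<open>U\<^sub>i\<^sub>k\<^sup>* U\<^sub>i\<^sub>k\<close> are the projection onto the span of the
  \<open>\<epsilon>\<^sub>\<sigma>\<^sub>,\<^sub>v\<close> with \<open>\<sigma> k = i\<close>, while, \<open>\<sigma>\<close> being injective, \<open>U\<^sub>j\<^sub>k U\<^sub>i\<^sub>l\<^sup>*\<close> and \<open>U\<^sub>i\<^sub>l\<^sup>* U\<^sub>j\<^sub>k\<close>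
  vanish unless \<open>i = j \<longleftrightarrow> k = l\<close>; summing over \<open>i\<close> gives the remaining relations.\<close>

lemma infsum_eq_single:
  fixes f :: "'a \<Rightarrow> 'b::{comm_monoid_add, t2_space}"
  assumes "c \<in> S" and "\<And>x. x \<in> S \<Longrightarrow> x \<noteq> c \<Longrightarrow> f x = 0"
  shows "infsum f S = f c"
proof -
  have "infsum f S = infsum f {c}"
    by (rule infsum_cong_neutral) (use assms in auto)
  then show ?thesis by simp
qed

lemma omega_eq_cis: "omega \<theta> i j = cis (2 * pi * \<theta> i j)"
  by (simp add: omega_def cis_conv_exp mult_ac)

lemma cnj_omega:
  assumes "\<theta> j i = - \<theta> i j"
  shows "cnj (omega \<theta> i j) = omega \<theta> j i"
  using assms by (simp add: omega_eq_cis cis_cnj)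

lemma omega_mult_swap:
  assumes "\<theta> j i = - \<theta> i j"
  shows "omega \<theta> i j * omega \<theta> j i = 1"
  using assms by (simp add: omega_eq_cis cis_mult)

lemma omega_diag:
  assumes "\<theta> i i = - \<theta> i i"
  shows "omega \<theta> i i = 1"
  using assms by (simp add: omega_def)

lemma finite_Lam: "finite (Lam n)"
  by (rule finite_subset[of _ "{1..n} \<times> {1..n}"]) (auto simp: Lam_def)

lemma Idx_permutes: "b \<in> Idx n \<Longrightarrow> fst b permutes {1..n}"
  by (auto simp: Idx_def)

lemma Idx_perm_eq_iff: "b \<in> Idx n \<Longrightarrow> fst b k = fst b l \<longleftrightarrow> k = l"
  by (meson Idx_permutes permutes_inj injD)

lemma Idx_perm_in: "b \<in> Idx n \<Longrightarrow> k \<in> {1..n} \<Longrightarrow> fst b k \<in> {1..n}"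
  by (meson Idx_permutes permutes_in_image)

definition shift :: "nat \<Rightarrow> nat \<Rightarrow> int \<Rightarrow> bidx \<Rightarrow> bidx" where
  "shift n k d b = (fst b, \<lambda>p. if p \<in> Lam n then snd b p + (if snd p = k then d else 0) else 0)"

lemma fst_shift [simp]: "fst (shift n k d b) = fst b"
  by (simp add: shift_def)

lemma shift_in_Idx: "b \<in> Idx n \<Longrightarrow> shift n k d b \<in> Idx n"
  by (auto simp: Idx_def shift_def)

lemma shift_commute: "shift n k d (shift n l e b) = shift n l e (shift n k d b)"
  by (auto simp: shift_def)

lemma shift_shift: "shift n k d (shift n k e b) = shift n k (d + e) b"
  by (auto simp: shift_def)

lemma shift_zero: "b \<in> Idx n \<Longrightarrow> shift n k 0 b = b"
  by (cases b) (auto simp: Idx_def shift_def)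

lemma shift_inverse: "b \<in> Idx n \<Longrightarrow> shift n k (- d) (shift n k d b) = b"
  by (simp add: shift_shift shift_zero)

lemma shift_inject:
  assumes "a \<in> Idx n" and "b \<in> Idx n"
  shows "shift n k d a = shift n k d b \<longleftrightarrow> a = b"
  by (metis assms shift_inverse)

lemma Utgt_eq_shift: "Utgt n \<theta> i k b = shift n k 1 b"
  by (auto simp: Utgt_def shift_def Ufac_def Lam_def)

lemma Umat_eq:
  "Umat n \<theta> i k a b = (if fst b k = i \<and> a = shift n k 1 b then Ucoef n \<theta> i k b else 0)"
  by (simp add: Umat_def Utgt_eq_shift)

lemma norm_Ucoef: "norm (Ucoef n \<theta> i k b) = 1"
proof -
  have "norm (fst (Ufac \<theta> i k \<sigma> p m)) = 1" for \<sigma> p m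
    by (auto simp: Ufac_def omega_eq_cis norm_power_int norm_mult)
  then show ?thesis
    by (simp add: Ucoef_def prod_norm[symmetric])
qed

lemma Ucoef_mult_cnj: "Ucoef n \<theta> i k b * cnj (Ucoef n \<theta> i k b) = 1"
  by (metis complex_norm_square norm_Ucoef of_real_1 power_one)

lemma fst_Ufac_shift:
  assumes "p \<in> Lam n"
  shows "fst (Ufac \<theta> i k \<sigma> p (m + (if snd p = l then 1 else 0)))
       = fst (Ufac \<theta> i k \<sigma> p m) * (if p = (k, l) then cnj (omega \<theta> i (\<sigma> l)) * omega \<theta> k l else 1)"
proof -
  obtain p1 p2 where p: "p = (p1, p2)" "p1 < p2"
    using assms by (auto simp: Lam_def)
  have "omega \<theta> i j \<noteq> 0" for i j
    by (simp add: omega_def)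
  then show ?thesis
    using p by (auto simp: Ufac_def power_int_add_1)
qed

lemma Ucoef_shift:
  "Ucoef n \<theta> i k (shift n l 1 b)
     = Ucoef n \<theta> i k b * (if (k, l) \<in> Lam n then cnj (omega \<theta> i (fst b l)) * omega \<theta> k l else 1)"
proof -
  let ?c = "\<lambda>p. if p = (k, l) then cnj (omega \<theta> i (fst b l)) * omega \<theta> k l else 1"
  have "Ucoef n \<theta> i k (shift n l 1 b) = (\<Prod>p\<in>Lam n. fst (Ufac \<theta> i k (fst b) p (snd b p)) * ?c p)"
    unfolding Ucoef_def shift_def by (intro prod.cong refl) (simp add: fst_Ufac_shift)
  also have "\<dots> = Ucoef n \<theta> i k b * prod ?c (Lam n)"
    unfolding Ucoef_def by (rule prod.distrib)
  finally show ?thesis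
    by (simp add: prod.delta[OF finite_Lam])
qed

lemma mmult_Umat_Umat:
  assumes "b \<in> Idx n"
  shows "mmult n (Umat n \<theta> i k) (Umat n \<theta> j l) a b =
    (if fst b k = i \<and> fst b l = j \<and> a = shift n k 1 (shift n l 1 b)
     then Ucoef n \<theta> j l b * Ucoef n \<theta> i k (shift n l 1 b) else 0)"
proof -
  have "mmult n (Umat n \<theta> i k) (Umat n \<theta> j l) a b
      = Umat n \<theta> i k a (shift n l 1 b) * Umat n \<theta> j l (shift n l 1 b) b"
    unfolding mmult_def
    by (rule infsum_eq_single) (simp_all add: assms shift_in_Idx Umat_eq)
  then show ?thesis
    by (auto simp: Umat_eq)
qed

lemma mmult_Umat_madj_Umat:
  assumes "a \<in> Idx n"
  shows "mmult n (Umat n \<theta> j k) (madj (Umat n \<theta> i l)) a b =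
    (if fst a k = j \<and> fst a l = i \<and> b = shift n l 1 (shift n k (-1) a)
     then Ucoef n \<theta> j k (shift n k (-1) a) * cnj (Ucoef n \<theta> i l (shift n k (-1) a)) else 0)"
proof -
  have "mmult n (Umat n \<theta> j k) (madj (Umat n \<theta> i l)) a b
      = Umat n \<theta> j k a (shift n k (-1) a) * cnj (Umat n \<theta> i l b (shift n k (-1) a))"
    unfolding mmult_def madj_def
  proof (rule infsum_eq_single)
    fix c
    assume "c \<in> Idx n" and "c \<noteq> shift n k (-1) a"
    then have "a \<noteq> shift n k 1 c"
      by (metis shift_inverse)
    then show "Umat n \<theta> j k a c * cnj (Umat n \<theta> i l b c) = 0"
      by (simp add: Umat_eq)
  qed (simp add: assms shift_in_Idx)
  then show ?thesis
    using assms by (auto simp: Umat_eq shift_shift shift_zero)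
qed

lemma mmult_madj_Umat_Umat:
  assumes "b \<in> Idx n"
  shows "mmult n (madj (Umat n \<theta> i l)) (Umat n \<theta> j k) a b =
    (if fst a l = i \<and> fst b k = j \<and> shift n l 1 a = shift n k 1 b
     then cnj (Ucoef n \<theta> i l a) * Ucoef n \<theta> j k b else 0)"
proof -
  have "mmult n (madj (Umat n \<theta> i l)) (Umat n \<theta> j k) a b
      = cnj (Umat n \<theta> i l (shift n k 1 b) a) * Umat n \<theta> j k (shift n k 1 b) b"
    unfolding mmult_def madj_def
    by (rule infsum_eq_single) (simp_all add: assms shift_in_Idx Umat_eq)
  then show ?thesis
    by (auto simp: Umat_eq)
qed

lemma Ucoef_twisted_commute:
  assumes skew: "\<forall>i\<in>{1..n}. \<forall>j\<in>{1..n}. \<theta> j i = - \<theta> i j"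
    and b: "b \<in> Idx n" and k: "k \<in> {1..n}" and l: "l \<in> {1..n}"
    and i: "fst b k = i" and j: "fst b l = j"
  shows "Ucoef n \<theta> j l b * Ucoef n \<theta> i k (shift n l 1 b)
       = omega \<theta> j i * omega \<theta> k l * (Ucoef n \<theta> i k b * Ucoef n \<theta> j l (shift n k 1 b))"
proof -
  have ij: "i \<in> {1..n}" "j \<in> {1..n}"
    using Idx_perm_in[OF b] k l i j by auto
  consider "k < l" | "k = l" | "l < k"
    by linarith
  then show ?thesis
  proof cases
    case 1
    then have "(k, l) \<in> Lam n" "(l, k) \<notin> Lam n"
      using k l by (auto simp: Lam_def)
    moreover have "cnj (omega \<theta> i j) = omega \<theta> j i"
      by (rule cnj_omega) (use skew ij in blast)
    ultimately have "Ucoef n \<theta> i k (shift n l 1 b) = Ucoef n \<theta> i k b * (omega \<theta> j i * omega \<theta> k l)"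
      and "Ucoef n \<theta> j l (shift n k 1 b) = Ucoef n \<theta> j l b"
      using j by (simp_all add: Ucoef_shift)
    then show ?thesis
      by (simp only: ac_simps)
  next
    case 2
    then have "(k, l) \<notin> Lam n" and "i = j"
      using i j by (auto simp: Lam_def)
    moreover have "omega \<theta> i i = 1" "omega \<theta> k k = 1"
      by (rule omega_diag; use skew ij k in blast)+
    ultimately show ?thesis
      using 2 by (simp add: Ucoef_shift mult.commute)
  next
    case 3
    then have "(k, l) \<notin> Lam n" "(l, k) \<in> Lam n"
      using k l by (auto simp: Lam_def)
    moreover have "cnj (omega \<theta> j i) = omega \<theta> i j"
      by (rule cnj_omega) (use skew ij in blast)
    ultimately have "Ucoef n \<theta> i k (shift n l 1 b) = Ucoef n \<theta> i k b"
      and "Ucoef n \<theta> j l (shift n k 1 b) = Ucoef n \<theta> j l b * (omega \<theta> i j * omega \<theta> l k)"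
      using i by (simp_all add: Ucoef_shift)
    moreover have "omega \<theta> j i * omega \<theta> i j = 1" "omega \<theta> k l * omega \<theta> l k = 1"
      by (rule omega_mult_swap; use skew ij k l in blast)+
    ultimately show ?thesis
      by (simp add: algebra_simps)
  qed
qed

lemma Umat_twisted_commute:
  assumes skew: "\<forall>i\<in>{1..n}. \<forall>j\<in>{1..n}. \<theta> j i = - \<theta> i j"
    and k: "k \<in> {1..n}" and l: "l \<in> {1..n}"
  shows "meq n (mmult n (Umat n \<theta> i k) (Umat n \<theta> j l))
               (msmult (omega \<theta> j i * omega \<theta> k l) (mmult n (Umat n \<theta> j l) (Umat n \<theta> i k)))"
  unfolding meq_def msmult_def
proof (intro ballI)
  fix a b
  assume b: "b \<in> Idx n"
  show "mmult n (Umat n \<theta> i k) (Umat n \<theta> j l) a b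
      = omega \<theta> j i * omega \<theta> k l * mmult n (Umat n \<theta> j l) (Umat n \<theta> i k) a b"
  proof (cases "fst b k = i \<and> fst b l = j")
    case True
    then show ?thesis
      using Ucoef_twisted_commute[OF skew b k l]
      by (auto simp: mmult_Umat_Umat[OF b] shift_commute)
  qed (auto simp: mmult_Umat_Umat[OF b])
qed

lemma Umat_commutation_relation:
  assumes skew: "\<forall>i\<in>{1..n}. \<forall>j\<in>{1..n}. \<theta> j i = - \<theta> i j"
    and i: "i \<in> {1..n}" and j: "j \<in> {1..n}" and k: "k \<in> {1..n}" and l: "l \<in> {1..n}"
  shows "meq n (madd (mmult n (Umat n \<theta> i k) (Umat n \<theta> j l))
                     (msmult (omega \<theta> j i) (mmult n (Umat n \<theta> j k) (Umat n \<theta> i l))))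
               (madd (msmult (omega \<theta> k l) (mmult n (Umat n \<theta> i l) (Umat n \<theta> j k)))
                     (msmult (omega \<theta> j i * omega \<theta> k l) (mmult n (Umat n \<theta> j l) (Umat n \<theta> i k))))"
proof -
  have "omega \<theta> j i * omega \<theta> i j = 1"
    by (rule omega_mult_swap) (use skew i j in blast)
  then show ?thesis
    using Umat_twisted_commute[OF skew k l, of i j] Umat_twisted_commute[OF skew k l, of j i]
    by (simp add: meq_def madd_def msmult_def algebra_simps)
qed

lemma mmult_Umat_madj_Umat_same:
  assumes "a \<in> Idx n"
  shows "mmult n (Umat n \<theta> i k) (madj (Umat n \<theta> i k)) a b = (if fst a k = i \<and> a = b then 1 else 0)"
  using assms by (auto simp: mmult_Umat_madj_Umat shift_shift shift_zero Ucoef_mult_cnj)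

lemma mmult_madj_Umat_Umat_same:
  assumes "a \<in> Idx n" and "b \<in> Idx n"
  shows "mmult n (madj (Umat n \<theta> i k)) (Umat n \<theta> i k) a b = (if fst a k = i \<and> a = b then 1 else 0)"
  using assms by (auto simp: mmult_madj_Umat_Umat shift_inject Ucoef_mult_cnj mult.commute)

lemma mmult_Umat_madj_Umat_eq_0:
  assumes "a \<in> Idx n" and "(i = j) \<noteq> (k = l)"
  shows "mmult n (Umat n \<theta> j k) (madj (Umat n \<theta> i l)) a b = 0"
  using assms by (auto simp: mmult_Umat_madj_Umat Idx_perm_eq_iff)

lemma mmult_madj_Umat_Umat_eq_0:
  assumes "b \<in> Idx n" and "(i = j) \<noteq> (k = l)"
  shows "mmult n (madj (Umat n \<theta> i l)) (Umat n \<theta> j k) a b = 0"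
proof -
  have "fst a = fst b" if "shift n l 1 a = shift n k 1 b"
    using arg_cong[OF that, of fst] by simp
  then show ?thesis
    using assms by (auto simp: mmult_madj_Umat_Umat Idx_perm_eq_iff)
qed

lemma sum_indicator_perm_eq_mid:
  assumes "a \<in> Idx n" and "k \<in> {1..n}"
  shows "(\<Sum>i\<in>{1..n}. if fst a k = i \<and> a = b then 1 else 0) = mid a b"
  using Idx_perm_in[OF assms] by (cases "a = b") (simp_all add: mid_def)

lemma msum_mmult_Umat_madj_eq_delta:
  assumes k: "k \<in> {1..n}"
  shows "meq n (msum {1..n} (\<lambda>i. mmult n (Umat n \<theta> i k) (madj (Umat n \<theta> i l))))
               (if k = l then mid else mzero)" (is "meq n ?S ?D")
  unfolding meq_def
proof (intro ballI)
  fix a b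
  assume a: "a \<in> Idx n"
  show "?S a b = ?D a b"
  proof (cases "k = l")
    case True
    then show ?thesis
      unfolding msum_def using a k
      by (simp only: mmult_Umat_madj_Umat_same sum_indicator_perm_eq_mid simp_thms if_True)
  qed (use a in \<open>simp add: msum_def mzero_def mmult_Umat_madj_Umat_eq_0\<close>)
qed

lemma msum_mmult_madj_Umat_eq_delta:
  assumes k: "k \<in> {1..n}"
  shows "meq n (msum {1..n} (\<lambda>i. mmult n (madj (Umat n \<theta> i l)) (Umat n \<theta> i k)))
               (if k = l then mid else mzero)" (is "meq n ?S ?D")
  unfolding meq_def
proof (intro ballI)
  fix a b
  assume a: "a \<in> Idx n" and b: "b \<in> Idx n"
  show "?S a b = ?D a b"
  proof (cases "k = l")
    case True
    then show ?thesis
      unfolding msum_def using a b k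
      by (simp only: mmult_madj_Umat_Umat_same sum_indicator_perm_eq_mid simp_thms if_True)
  qed (use b in \<open>simp add: msum_def mzero_def mmult_madj_Umat_Umat_eq_0\<close>)
qed

lemma mmult_Umat_madj_orthogonal:
  assumes "i \<noteq> j"
  shows "meq n (mmult n (Umat n \<theta> j k) (madj (Umat n \<theta> i k))) mzero"
    and "meq n (mmult n (madj (Umat n \<theta> i k)) (Umat n \<theta> j k)) mzero"
  using assms by (simp_all add: meq_def mzero_def mmult_Umat_madj_Umat_eq_0 mmult_madj_Umat_Umat_eq_0)

theorem proposition3p2:
  fixes n :: nat and \<theta> :: "nat \<Rightarrow> nat \<Rightarrow> real"
  assumes "n \<ge> 2"
    and "\<forall>i\<in>{1..n}. \<forall>j\<in>{1..n}. \<theta> j i = - \<theta> i j"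
  defines "U \<equiv> Umat n \<theta>" and "\<omega> \<equiv> omega \<theta>"
  shows
   "(\<forall>i\<in>{1..n}. \<forall>j\<in>{1..n}. \<forall>k\<in>{1..n}. \<forall>l\<in>{1..n}.
       meq n (madd (mmult n (U i k) (U j l)) (msmult (\<omega> j i) (mmult n (U j k) (U i l))))
             (madd (msmult (\<omega> k l) (mmult n (U i l) (U j k)))
                   (msmult (\<omega> j i * \<omega> k l) (mmult n (U j l) (U i k)))))
    \<and> (\<forall>k\<in>{1..n}. \<forall>l\<in>{1..n}.
         meq n (msum {1..n} (\<lambda>i. mmult n (U i k) (madj (U i l)))) (if k = l then mid else mzero))
    \<and> (\<forall>k\<in>{1..n}. \<forall>l\<in>{1..n}.
         meq n (msum {1..n} (\<lambda>i. mmult n (madj (U i l)) (U i k))) (if k = l then mid else mzero))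
    \<and> (\<forall>i\<in>{1..n}. \<forall>j\<in>{1..n}. \<forall>k\<in>{1..n}. i \<noteq> j \<longrightarrow>
         meq n (mmult n (U j k) (madj (U i k))) mzero \<and> meq n (mmult n (madj (U i k)) (U j k)) mzero)"
  unfolding U_def \<omega>_def
  by (intro conjI ballI impI Umat_commutation_relation[OF assms(2)] msum_mmult_Umat_madj_eq_delta
      msum_mmult_madj_Umat_eq_delta mmult_Umat_madj_orthogonal)

end
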